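(* Let $p_1,p_2,p_3,p_4>0$ with $\Delta:=p_1p_4-p_2p_3\neq0$, $S=p_1+p_2+p_3+p_4$, and let $u_1,u_2,v_1,v_2$ be given by \[ u_1=\frac{(p_1+p_2)(p_1+p_3)}{p_1S},\quad u_2=\frac{(p_1+p_2)(p_2+p_4)}{p_2S},\quad v_1=\frac{(p_1+p_3)(p_3+p_4)}{p_3S},\quad v_2=\frac{(p_2+p_4)(p_3+p_4)}{p_4S}. \] Let $N$ be a nonnegative integer and let $P_{m_1,m_2}(x_1,x_2)$ be formed with these $u$'s and $v$'s. Then for all nonnegative integers $x_1,x_2$ with $x_1+x_2\le N$ and $m_1,m_2$ with $m_1+m_2\le N$ (terms whose coefficient $N-m_1-m_2$, $m_1$, or $m_2$ vanishes being omitted), \begin{align*} &(N-m_1-m_2)\Big\{\frac{p_1p_3(p_2+p_4)S}{(p_1+p_3)\Delta}\big(P_{m_1+1,m_2}-P_{m_1,m_2}\big)-\frac{p_2p_4(p_1+p_3)S}{(p_2+p_4)\Delta}\big(P_{m_1,m_2+1}-P_{m_1,m_2}\big)\Big\}\\ &\quad+m_1\frac{\Delta}{p_1+p_3}\big(P_{m_1-1,m_2}-P_{m_1,m_2}\big)-m_2\frac{\Delta}{p_2+p_4}\big(P_{m_1,m_2-1}-P_{m_1,m_2}\big)\\ &=\big((p_1+p_2)x_1-(p_3+p_4)x_2\big)P_{m_1,m_2}(x_1,x_2), \end{align*} where every $P$ is evaluated at $(x_1,x_2)$.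
   Context: Notation: $(a)_k=a(a+1)\cdots(a+k-1)$, $(a)_0=1$, is the Pochhammer symbol. For a nonnegative integer $N$, nonnegative integers $m_1,m_2,x_1,x_2$ with $x_1+x_2\le N$, and parameters $u_1,v_1,u_2,v_2$, define \[ P_{m_1,m_2}(x_1,x_2)=\sum_{\substack{i,j,k,l\ge 0\\ i+j+k+l\le N}}\frac{(-m_1)_{i+j}(-m_2)_{k+l}(-x_1)_{i+k}(-x_2)_{j+l}}{i!\,j!\,k!\,l!\,(-N)_{i+j+k+l}}\,u_1^i v_1^j u_2^k v_2^l . \] *)

theory Defs
  imports Complex_Main
begin

definition Pbiv :: "nat \<Rightarrow> real \<Rightarrow> real \<Rightarrow> real \<Rightarrow> real \<Rightarrow> nat \<Rightarrow> nat \<Rightarrow> nat \<Rightarrow> nat \<Rightarrow> real" where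
  "Pbiv N u1 v1 u2 v2 m1 m2 x1 x2 =
     (\<Sum>(i,j,k,l)\<in>{(i,j,k,l). i + j + k + l \<le> N}.
        pochhammer (- real m1) (i + j) * pochhammer (- real m2) (k + l)
        * pochhammer (- real x1) (i + k) * pochhammer (- real x2) (j + l)
        / (fact i * fact j * fact k * fact l * pochhammer (- real N) (i + j + k + l))
        * u1 ^ i * v1 ^ j * u2 ^ k * v2 ^ l)"

end

theory Submission
  imports Defs
begin

text \<open>
  Write P_{m1,m2}(x1,x2) as the sum over (i,j,k,l) in {0..N}^4 of
  (-m1)_{i+j} (-m2)_{k+l} c(x1;i,k) c(x2;j,l) / (-N)_{i+j+k+l}, where
  c(x;i,k) = (-x)_{i+k} u^i w^k / (i! k!) is the coefficient of u^i w^k in (1 - u - w)^x.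
  The difference operator only acts on the two Pochhammer symbols in m.
  Lowering m1 multiplies a summand by -(i+j). Raising m1 produces -(i+j) (N - m1 - m2) (-m1)_{i+j-1},
  and splitting N - m1 - m2 = (N - n + 1) + (i + j - 1 - m1) + (k + l - m2) leaves, besides the
  summand itself, two kinds of terms whose m1-index has dropped by one. Shifting i (or j) back by one and
  using (i+1) c(x;i+1,k) = u (i+k-x) c(x;i,k) and (k+1) c(x;i,k+1) = w (i+k-x) c(x;i,k) turns them into
  the original summand times a coefficient linear in i, j, k, l, x1, x2; the boundary terms vanish since
  c(x;i,k) = 0 for i + k > x and x1 + x2 <= N. For the given u's and v's the coefficients of
  i, j, k, l cancel and those of x1, x2 are p1 + p2 and -(p3 + p4).
  The symmetries (i,k,x1,u) <-> (j,l,x2,v) and (i,j,m1) <-> (k,l,m2) of the summand reduce the work to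
  one index shift of each kind.
\<close>

definition trinomial_term :: "nat \<Rightarrow> real \<Rightarrow> real \<Rightarrow> nat \<Rightarrow> nat \<Rightarrow> real" where
  "trinomial_term x u w i k = pochhammer (- real x) (i + k) * u ^ i * w ^ k / (fact i * fact k)"

lemma trinomial_term_eq_0: "x < i + k \<Longrightarrow> trinomial_term x u w i k = 0"
  by (simp add: trinomial_term_def pochhammer_of_nat_eq_0_iff)

lemma trinomial_term_commute: "trinomial_term x u w i k = trinomial_term x w u k i"
  by (simp add: trinomial_term_def ac_simps)

lemma trinomial_term_Suc_left:
  "real (Suc i) * trinomial_term x u w (Suc i) k = u * (real (i + k) - real x) * trinomial_term x u w i k"
  by (simp add: trinomial_term_def pochhammer_Suc del: of_nat_Suc)

lemma trinomial_term_Suc_right: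
  "real (Suc k) * trinomial_term x u w i (Suc k) = w * (real (i + k) - real x) * trinomial_term x u w i k"
  using trinomial_term_Suc_left[of k x w u i] by (simp add: trinomial_term_commute add.commute)

lemma trinomial_term_Suc_left_right:
  assumes "w \<noteq> 0"
  shows "real (Suc i) * trinomial_term x u w (Suc i) k = u / w * (real (Suc k) * trinomial_term x u w i (Suc k))"
  unfolding trinomial_term_Suc_left trinomial_term_Suc_right using assms by simp

lemma trinomial_term_boundary:
  assumes "x1 + x2 \<le> N" "N \<le> i + j + k + l"
  shows "(real (i + k) - real x1) * trinomial_term x1 u1 u2 i k * trinomial_term x2 v1 v2 j l = 0"
proof (cases "x1 < i + k \<or> x2 < j + l")
  case True
  then show ?thesis by (auto simp: trinomial_term_eq_0)
next
  case False
  with assms have "i + k = x1" by linarith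
  then show ?thesis by simp
qed

lemma pochhammer_minus_plus_one_diff:
  "pochhammer (- (z + 1)) a - pochhammer (- z) a = - of_nat a * pochhammer (- z :: 'a :: comm_ring_1) (a - 1)"
proof (cases a)
  case (Suc n)
  have rec: "pochhammer (- (z + 1)) (Suc n) = - (z + 1) * pochhammer (- z) n"
    using pochhammer_rec[of "- (z + 1)" n] by simp
  show ?thesis
    unfolding Suc rec by (simp add: pochhammer_Suc algebra_simps)
qed simp

lemma pochhammer_minus_minus_one_diff:
  "z * (pochhammer (- (z - 1)) a - pochhammer (- z) a) = - of_nat a * pochhammer (- z :: 'a :: comm_ring_1) a"
proof (cases a)
  case (Suc n)
  have rec: "pochhammer (- z) (Suc n) = - z * pochhammer (1 - z) n"
    using pochhammer_rec[of "- z" n] by (simp add: add.commute)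
  show ?thesis
    unfolding Suc rec by (simp add: pochhammer_Suc algebra_simps)
qed simp

lemma pochhammer_product_absorb:
  "(c - A - B) * pochhammer (- A) a * pochhammer (- B) b
   = (c - of_nat a - of_nat b) * pochhammer (- A) a * pochhammer (- B) b
     + pochhammer (- A) (Suc a) * pochhammer (- B) b + pochhammer (- A) a * pochhammer (- B :: 'a :: comm_ring_1) (Suc b)"
  by (simp add: pochhammer_Suc algebra_simps)

text \<open>For n >= N the left denominator (-N)_{n+1} vanishes, so the left side is 0 by the
  convention x / 0 = 0; the hypothesis makes the right side 0 as well.\<close>
lemma divide_pochhammer_neg_nat_Suc:
  assumes "N \<le> n \<Longrightarrow> y = 0"
  shows "y * (real N - real n) / pochhammer (- real N) (Suc n) = - y / pochhammer (- real N) n"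
proof (cases "N \<le> n")
  case False
  then have "pochhammer (- real N) n \<noteq> 0" "real n - real N \<noteq> 0"
    by (simp_all add: pochhammer_of_nat_eq_0_iff)
  then show ?thesis by (simp add: pochhammer_Suc field_simps)
qed (use assms in simp)

definition sum4 :: "nat \<Rightarrow> (nat \<Rightarrow> nat \<Rightarrow> nat \<Rightarrow> nat \<Rightarrow> 'a::comm_monoid_add) \<Rightarrow> 'a" where
  "sum4 R F = (\<Sum>i<R. \<Sum>j<R. \<Sum>k<R. \<Sum>l<R. F i j k l)"

lemma sum4_cong: "(\<And>i j k l. F i j k l = G i j k l) \<Longrightarrow> sum4 R F = sum4 R G"
  by (simp add: sum4_def)

lemma sum4_add: "sum4 R (\<lambda>i j k l. F i j k l + G i j k l) = sum4 R F + sum4 R G"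
  by (simp add: sum4_def sum.distrib)

lemma sum4_diff: "sum4 R (\<lambda>i j k l. F i j k l - G i j k l) = sum4 R F - (sum4 R G :: 'a :: ab_group_add)"
  by (simp add: sum4_def sum_subtractf)

lemma sum4_neg: "sum4 R (\<lambda>i j k l. - F i j k l) = - (sum4 R F :: 'a :: ab_group_add)"
  by (simp add: sum4_def sum_negf)

lemma sum4_mult_left: "sum4 R (\<lambda>i j k l. c * F i j k l) = c * (sum4 R F :: 'a :: semiring_0)"
  by (simp add: sum4_def sum_distrib_left)

lemma sum4_swap_pairs: "sum4 R (\<lambda>i j k l. F j i l k) = sum4 R F"
proof -
  have "sum4 R (\<lambda>i j k l. F j i l k) = (\<Sum>j<R. \<Sum>i<R. \<Sum>k<R. \<Sum>l<R. F j i l k)"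
    unfolding sum4_def by (rule sum.swap)
  also have "\<dots> = (\<Sum>j<R. \<Sum>i<R. \<Sum>l<R. \<Sum>k<R. F j i l k)"
    by (rule sum.cong[OF refl], rule sum.cong[OF refl], rule sum.swap)
  finally show ?thesis unfolding sum4_def .
qed

lemma sum4_swap_blocks: "sum4 R (\<lambda>i j k l. F k l i j) = sum4 R F"
proof -
  have "sum4 R (\<lambda>i j k l. F k l i j) = (\<Sum>i<R. \<Sum>k<R. \<Sum>j<R. \<Sum>l<R. F k l i j)"
    unfolding sum4_def by (rule sum.cong[OF refl], rule sum.swap)
  also have "\<dots> = (\<Sum>k<R. \<Sum>i<R. \<Sum>l<R. \<Sum>j<R. F k l i j)"
    by (subst sum.swap, rule sum.cong[OF refl], rule sum.cong[OF refl], rule sum.swap)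
  also have "\<dots> = (\<Sum>k<R. \<Sum>l<R. \<Sum>i<R. \<Sum>j<R. F k l i j)"
    by (rule sum.cong[OF refl], rule sum.swap)
  finally show ?thesis unfolding sum4_def .
qed

lemma sum_lessThan_shift:
  "f 0 = 0 \<Longrightarrow> f R = 0 \<Longrightarrow> (\<Sum>i<R. f i) = (\<Sum>i<R. f (Suc i) :: 'a :: comm_monoid_add)"
  by (metis add.commute add_0 sum.lessThan_Suc sum.lessThan_Suc_shift)

lemma sum4_shift_first:
  "(\<And>j k l. F 0 j k l = 0) \<Longrightarrow> (\<And>j k l. F R j k l = 0) \<Longrightarrow> sum4 R F = sum4 R (\<lambda>i. F (Suc i))"
  unfolding sum4_def by (rule sum_lessThan_shift) (simp_all add: sum.neutral)

lemma sum4_shift_third: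
  "(\<And>i j l. F i j 0 l = 0) \<Longrightarrow> (\<And>i j l. F i j R l = 0) \<Longrightarrow> sum4 R F = sum4 R (\<lambda>i j k. F i j (Suc k))"
  unfolding sum4_def by (intro sum.cong refl sum_lessThan_shift) (simp_all add: sum.neutral)

definition krawtchouk_term ::
    "nat \<Rightarrow> real \<Rightarrow> real \<Rightarrow> real \<Rightarrow> real \<Rightarrow> real \<Rightarrow> real \<Rightarrow> nat \<Rightarrow> nat \<Rightarrow> nat \<Rightarrow> nat \<Rightarrow> nat \<Rightarrow> nat \<Rightarrow> real" where
  "krawtchouk_term N u1 v1 u2 v2 A B x1 x2 i j k l =
     pochhammer (- A) (i + j) * pochhammer (- B) (k + l)
     * trinomial_term x1 u1 u2 i k * trinomial_term x2 v1 v2 j l / pochhammer (- real N) (i + j + k + l)"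

lemma krawtchouk_term_swap_pairs:
  "krawtchouk_term N v1 u1 v2 u2 A B x2 x1 j i l k = krawtchouk_term N u1 v1 u2 v2 A B x1 x2 i j k l"
  by (simp add: krawtchouk_term_def ac_simps)

lemma krawtchouk_term_swap_blocks:
  "krawtchouk_term N u2 v2 u1 v1 B A x1 x2 k l i j = krawtchouk_term N u1 v1 u2 v2 A B x1 x2 i j k l"
  by (simp add: krawtchouk_term_def trinomial_term_commute[of x1 u2] trinomial_term_commute[of x2 v2] ac_simps)

lemma sum4_eq_sum_product:
  "sum4 R F = (\<Sum>(i, j, k, l) \<in> {..<R} \<times> {..<R} \<times> {..<R} \<times> {..<R}. F i j k l)"
  by (simp add: sum4_def sum.cartesian_product)

lemma Pbiv_eq_sum4:
  "Pbiv N u1 v1 u2 v2 m1 m2 x1 x2 = sum4 (Suc N) (krawtchouk_term N u1 v1 u2 v2 (real m1) (real m2) x1 x2)"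
proof -
  define f where "f = (\<lambda>(i, j, k, l). krawtchouk_term N u1 v1 u2 v2 (real m1) (real m2) x1 x2 i j k l)"
  have "Pbiv N u1 v1 u2 v2 m1 m2 x1 x2 = sum f {(i, j, k, l). i + j + k + l \<le> N}"
    unfolding Pbiv_def f_def krawtchouk_term_def trinomial_term_def
    by (intro sum.cong) (auto simp: field_simps)
  \<comment> \<open>outside the simplex (-N)_{i+j+k+l} = 0, so the summand is 0 by x / 0 = 0\<close>
  also have "\<dots> = sum f ({..<Suc N} \<times> {..<Suc N} \<times> {..<Suc N} \<times> {..<Suc N})"
    by (rule sum.mono_neutral_left) (auto simp: f_def krawtchouk_term_def pochhammer_of_nat_eq_0_iff)
  also have "\<dots> = sum4 (Suc N) (krawtchouk_term N u1 v1 u2 v2 (real m1) (real m2) x1 x2)"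
    unfolding sum4_eq_sum_product f_def ..
  finally show ?thesis .
qed

lemma sum4_summation_by_parts_first:
  assumes "x1 + x2 \<le> N"
  shows "sum4 (Suc N) (\<lambda>i j k l. real i * (real N - real (i + j + k + l) + 1)
            * pochhammer (- A) (i + j - 1) * pochhammer (- B) (k + l)
            * trinomial_term x1 u1 u2 i k * trinomial_term x2 v1 v2 j l / pochhammer (- real N) (i + j + k + l))
       = - sum4 (Suc N) (\<lambda>i j k l. u1 * (real (i + k) - real x1) * krawtchouk_term N u1 v1 u2 v2 A B x1 x2 i j k l)"
    (is "sum4 _ ?F = _")
proof -
  have shifted: "?F (Suc i) j k l = - (u1 * (real (i + k) - real x1) * krawtchouk_term N u1 v1 u2 v2 A B x1 x2 i j k l)"
    for i j k l
  proof -
    let ?n = "i + j + k + l" and ?y = "(real (i + k) - real x1) * trinomial_term x1 u1 u2 i k * trinomial_term x2 v1 v2 j l"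
    have "?F (Suc i) j k l = pochhammer (- A) (i + j) * pochhammer (- B) (k + l) * trinomial_term x2 v1 v2 j l
        * (real (Suc i) * trinomial_term x1 u1 u2 (Suc i) k) * (real N - real ?n) / pochhammer (- real N) (Suc ?n)"
      by (simp add: algebra_simps)
    also have "\<dots> = u1 * pochhammer (- A) (i + j) * pochhammer (- B) (k + l) * (?y * (real N - real ?n) / pochhammer (- real N) (Suc ?n))"
      unfolding trinomial_term_Suc_left by (simp add: ac_simps)
    also have "\<dots> = u1 * pochhammer (- A) (i + j) * pochhammer (- B) (k + l) * (- ?y / pochhammer (- real N) ?n)"
      using divide_pochhammer_neg_nat_Suc trinomial_term_boundary[OF assms] by presburger
    also have "\<dots> = - (u1 * (real (i + k) - real x1) * krawtchouk_term N u1 v1 u2 v2 A B x1 x2 i j k l)"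
      by (simp add: krawtchouk_term_def)
    finally show ?thesis .
  qed
  have "sum4 (Suc N) ?F = sum4 (Suc N) (\<lambda>i. ?F (Suc i))"
    by (rule sum4_shift_first) (use assms in \<open>simp_all add: trinomial_term_eq_0\<close>)
  also have "\<dots> = - sum4 (Suc N) (\<lambda>i j k l. u1 * (real (i + k) - real x1) * krawtchouk_term N u1 v1 u2 v2 A B x1 x2 i j k l)"
    unfolding shifted sum4_neg ..
  finally show ?thesis .
qed

lemma sum4_summation_by_parts_first_third:
  assumes "x1 \<le> N" "u2 \<noteq> 0"
  shows "sum4 (Suc N) (\<lambda>i j k l. real i * pochhammer (- A) (i + j - 1) * pochhammer (- B) (Suc (k + l))
            * trinomial_term x1 u1 u2 i k * trinomial_term x2 v1 v2 j l / pochhammer (- real N) (i + j + k + l))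
       = sum4 (Suc N) (\<lambda>i j k l. u1 / u2 * real k * krawtchouk_term N u1 v1 u2 v2 A B x1 x2 i j k l)"
    (is "sum4 _ ?F = sum4 _ ?G")
proof -
  have shifted: "?F (Suc i) j k l = ?G i j (Suc k) l" for i j k l
  proof -
    have "?F (Suc i) j k l = pochhammer (- A) (i + j) * pochhammer (- B) (Suc (k + l)) * trinomial_term x2 v1 v2 j l
        * (real (Suc i) * trinomial_term x1 u1 u2 (Suc i) k) / pochhammer (- real N) (i + j + Suc k + l)"
      by (simp add: algebra_simps)
    also have "\<dots> = ?G i j (Suc k) l"
      unfolding trinomial_term_Suc_left_right[OF assms(2)] by (simp add: krawtchouk_term_def ac_simps)
    finally show ?thesis .
  qed
  have "sum4 (Suc N) ?F = sum4 (Suc N) (\<lambda>i. ?F (Suc i))"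
    by (rule sum4_shift_first) (use assms in \<open>simp_all add: trinomial_term_eq_0\<close>)
  also have "\<dots> = sum4 (Suc N) ?G"
    unfolding shifted
    by (rule sum4_shift_third[symmetric]) (use assms in \<open>simp_all add: krawtchouk_term_def trinomial_term_eq_0\<close>)
  finally show ?thesis .
qed

lemma sum4_summation_by_parts_pairs:
  assumes "x1 + x2 \<le> N"
  shows "sum4 (Suc N) (\<lambda>i j k l. real (i + j) * (real N - real (i + j + k + l) + 1)
            * pochhammer (- A) (i + j - 1) * pochhammer (- B) (k + l)
            * trinomial_term x1 u1 u2 i k * trinomial_term x2 v1 v2 j l / pochhammer (- real N) (i + j + k + l))
       = - sum4 (Suc N) (\<lambda>i j k l. (u1 * (real (i + k) - real x1) + v1 * (real (j + l) - real x2))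
            * krawtchouk_term N u1 v1 u2 v2 A B x1 x2 i j k l)"
proof -
  have swapped: "sum4 (Suc N) (\<lambda>i j k l. real j * (real N - real (i + j + k + l) + 1)
            * pochhammer (- A) (i + j - 1) * pochhammer (- B) (k + l)
            * trinomial_term x1 u1 u2 i k * trinomial_term x2 v1 v2 j l / pochhammer (- real N) (i + j + k + l))
       = - sum4 (Suc N) (\<lambda>i j k l. v1 * (real (j + l) - real x2) * krawtchouk_term N u1 v1 u2 v2 A B x1 x2 i j k l)"
  proof -
    have "x2 + x1 \<le> N" using assms by simp
    have "sum4 (Suc N) (\<lambda>i j k l. real j * (real N - real (i + j + k + l) + 1)
            * pochhammer (- A) (i + j - 1) * pochhammer (- B) (k + l)
            * trinomial_term x1 u1 u2 i k * trinomial_term x2 v1 v2 j l / pochhammer (- real N) (i + j + k + l))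
        = sum4 (Suc N) (\<lambda>i j k l. real i * (real N - real (i + j + k + l) + 1)
            * pochhammer (- A) (i + j - 1) * pochhammer (- B) (k + l)
            * trinomial_term x2 v1 v2 i k * trinomial_term x1 u1 u2 j l / pochhammer (- real N) (i + j + k + l))"
      by (subst sum4_swap_pairs[symmetric]) (simp add: ac_simps)
    also have "\<dots> = - sum4 (Suc N) (\<lambda>i j k l. v1 * (real (i + k) - real x2) * krawtchouk_term N v1 u1 v2 u2 A B x2 x1 i j k l)"
      by (rule sum4_summation_by_parts_first) fact
    also have "\<dots> = - sum4 (Suc N) (\<lambda>i j k l. v1 * (real (j + l) - real x2) * krawtchouk_term N u1 v1 u2 v2 A B x1 x2 i j k l)"
      by (subst sum4_swap_pairs[symmetric]) (simp add: krawtchouk_term_swap_pairs)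
    finally show ?thesis .
  qed
  have "sum4 (Suc N) (\<lambda>i j k l. (u1 * (real (i + k) - real x1) + v1 * (real (j + l) - real x2))
            * krawtchouk_term N u1 v1 u2 v2 A B x1 x2 i j k l)
      = sum4 (Suc N) (\<lambda>i j k l. u1 * (real (i + k) - real x1) * krawtchouk_term N u1 v1 u2 v2 A B x1 x2 i j k l)
        + sum4 (Suc N) (\<lambda>i j k l. v1 * (real (j + l) - real x2) * krawtchouk_term N u1 v1 u2 v2 A B x1 x2 i j k l)"
    unfolding sum4_add[symmetric] by (rule sum4_cong) (simp add: distrib_right)
  then show ?thesis
    unfolding of_nat_add distrib_right add_divide_distrib sum4_add
    using sum4_summation_by_parts_first[OF assms] swapped by simp
qed

lemma sum4_summation_by_parts_pairs_third:
  assumes "x1 + x2 \<le> N" "u2 \<noteq> 0" "v2 \<noteq> 0"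
  shows "sum4 (Suc N) (\<lambda>i j k l. real (i + j) * pochhammer (- A) (i + j - 1) * pochhammer (- B) (Suc (k + l))
            * trinomial_term x1 u1 u2 i k * trinomial_term x2 v1 v2 j l / pochhammer (- real N) (i + j + k + l))
       = sum4 (Suc N) (\<lambda>i j k l. (u1 / u2 * real k + v1 / v2 * real l) * krawtchouk_term N u1 v1 u2 v2 A B x1 x2 i j k l)"
proof -
  have swapped: "sum4 (Suc N) (\<lambda>i j k l. real j * pochhammer (- A) (i + j - 1) * pochhammer (- B) (Suc (k + l))
            * trinomial_term x1 u1 u2 i k * trinomial_term x2 v1 v2 j l / pochhammer (- real N) (i + j + k + l))
       = sum4 (Suc N) (\<lambda>i j k l. v1 / v2 * real l * krawtchouk_term N u1 v1 u2 v2 A B x1 x2 i j k l)"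
  proof -
    have "x2 \<le> N" using assms by simp
    have "sum4 (Suc N) (\<lambda>i j k l. real j * pochhammer (- A) (i + j - 1) * pochhammer (- B) (Suc (k + l))
            * trinomial_term x1 u1 u2 i k * trinomial_term x2 v1 v2 j l / pochhammer (- real N) (i + j + k + l))
        = sum4 (Suc N) (\<lambda>i j k l. real i * pochhammer (- A) (i + j - 1) * pochhammer (- B) (Suc (k + l))
            * trinomial_term x2 v1 v2 i k * trinomial_term x1 u1 u2 j l / pochhammer (- real N) (i + j + k + l))"
      by (subst sum4_swap_pairs[symmetric]) (simp add: ac_simps)
    also have "\<dots> = sum4 (Suc N) (\<lambda>i j k l. v1 / v2 * real k * krawtchouk_term N v1 u1 v2 u2 A B x2 x1 i j k l)"
      by (rule sum4_summation_by_parts_first_third) fact+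
    also have "\<dots> = sum4 (Suc N) (\<lambda>i j k l. v1 / v2 * real l * krawtchouk_term N u1 v1 u2 v2 A B x1 x2 i j k l)"
      by (subst sum4_swap_pairs[symmetric]) (simp add: krawtchouk_term_swap_pairs)
    finally show ?thesis .
  qed
  have "sum4 (Suc N) (\<lambda>i j k l. (u1 / u2 * real k + v1 / v2 * real l) * krawtchouk_term N u1 v1 u2 v2 A B x1 x2 i j k l)
      = sum4 (Suc N) (\<lambda>i j k l. u1 / u2 * real k * krawtchouk_term N u1 v1 u2 v2 A B x1 x2 i j k l)
        + sum4 (Suc N) (\<lambda>i j k l. v1 / v2 * real l * krawtchouk_term N u1 v1 u2 v2 A B x1 x2 i j k l)"
    unfolding sum4_add[symmetric] by (rule sum4_cong) (simp add: distrib_right)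
  then show ?thesis
    unfolding of_nat_add distrib_right add_divide_distrib sum4_add
    using sum4_summation_by_parts_first_third[of x1 N u2] swapped assms by simp
qed

lemma krawtchouk_term_raise_first_split:
  "(real N - A - B) * (krawtchouk_term N u1 v1 u2 v2 (A + 1) B x1 x2 i j k l - krawtchouk_term N u1 v1 u2 v2 A B x1 x2 i j k l)
   = - (real (i + j) * (real N - real (i + j + k + l) + 1) * pochhammer (- A) (i + j - 1) * pochhammer (- B) (k + l)
        * trinomial_term x1 u1 u2 i k * trinomial_term x2 v1 v2 j l / pochhammer (- real N) (i + j + k + l))
     - real (i + j) * pochhammer (- A) (i + j - 1) * pochhammer (- B) (Suc (k + l))
        * trinomial_term x1 u1 u2 i k * trinomial_term x2 v1 v2 j l / pochhammer (- real N) (i + j + k + l)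
     - real (i + j) * krawtchouk_term N u1 v1 u2 v2 A B x1 x2 i j k l"
  (is "_ = ?rhs")
proof (cases "i + j")
  case 0
  then show ?thesis by (simp add: krawtchouk_term_def)
next
  case (Suc a)
  define w where "w = trinomial_term x1 u1 u2 i k * trinomial_term x2 v1 v2 j l / pochhammer (- real N) (i + j + k + l)"
  have kt_w: "krawtchouk_term N u1 v1 u2 v2 A' B x1 x2 i j k l = pochhammer (- A') (i + j) * pochhammer (- B) (k + l) * w" for A'
    by (simp add: krawtchouk_term_def w_def)
  have "(real N - A - B) * (krawtchouk_term N u1 v1 u2 v2 (A + 1) B x1 x2 i j k l - krawtchouk_term N u1 v1 u2 v2 A B x1 x2 i j k l)
      = (pochhammer (- (A + 1)) (i + j) - pochhammer (- A) (i + j)) * ((real N - A - B) * pochhammer (- B) (k + l) * w)"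
    unfolding kt_w by (simp add: algebra_simps)
  also have "\<dots> = - real (i + j) * ((real N - A - B) * pochhammer (- A) a * pochhammer (- B) (k + l)) * w"
    unfolding pochhammer_minus_plus_one_diff Suc by simp
  also have "\<dots> = - real (i + j) * ((real N - real a - real (k + l)) * pochhammer (- A) a * pochhammer (- B) (k + l)
      + pochhammer (- A) (Suc a) * pochhammer (- B) (k + l) + pochhammer (- A) a * pochhammer (- B) (Suc (k + l))) * w"
    unfolding pochhammer_product_absorb ..
  also have "\<dots> = ?rhs"
    using Suc unfolding kt_w w_def by (simp add: divide_inverse algebra_simps)
  finally show ?thesis .
qed

lemma sum4_krawtchouk_term_raise_first:
  assumes "x1 + x2 \<le> N" "u2 \<noteq> 0" "v2 \<noteq> 0"
  shows "sum4 (Suc N) (\<lambda>i j k l. (real N - A - B)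
            * (krawtchouk_term N u1 v1 u2 v2 (A + 1) B x1 x2 i j k l - krawtchouk_term N u1 v1 u2 v2 A B x1 x2 i j k l))
       = sum4 (Suc N) (\<lambda>i j k l. (u1 * (real (i + k) - real x1) + v1 * (real (j + l) - real x2) - real (i + j)
            - u1 / u2 * real k - v1 / v2 * real l) * krawtchouk_term N u1 v1 u2 v2 A B x1 x2 i j k l)"
proof -
  have "sum4 (Suc N) (\<lambda>i j k l. (real N - A - B)
            * (krawtchouk_term N u1 v1 u2 v2 (A + 1) B x1 x2 i j k l - krawtchouk_term N u1 v1 u2 v2 A B x1 x2 i j k l))
      = sum4 (Suc N) (\<lambda>i j k l. (u1 * (real (i + k) - real x1) + v1 * (real (j + l) - real x2))
            * krawtchouk_term N u1 v1 u2 v2 A B x1 x2 i j k l)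
        - sum4 (Suc N) (\<lambda>i j k l. (u1 / u2 * real k + v1 / v2 * real l) * krawtchouk_term N u1 v1 u2 v2 A B x1 x2 i j k l)
        - sum4 (Suc N) (\<lambda>i j k l. real (i + j) * krawtchouk_term N u1 v1 u2 v2 A B x1 x2 i j k l)"
    unfolding krawtchouk_term_raise_first_split sum4_diff sum4_neg
      sum4_summation_by_parts_pairs[OF assms(1)] sum4_summation_by_parts_pairs_third[OF assms]
    by simp
  also have "\<dots> = sum4 (Suc N) (\<lambda>i j k l. (u1 * (real (i + k) - real x1) + v1 * (real (j + l) - real x2) - real (i + j)
            - u1 / u2 * real k - v1 / v2 * real l) * krawtchouk_term N u1 v1 u2 v2 A B x1 x2 i j k l)"
    unfolding sum4_diff[symmetric] by (rule sum4_cong) (simp add: algebra_simps)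
  finally show ?thesis .
qed

lemma sum4_krawtchouk_term_raise_second:
  assumes "x1 + x2 \<le> N" "u1 \<noteq> 0" "v1 \<noteq> 0"
  shows "sum4 (Suc N) (\<lambda>i j k l. (real N - A - B)
            * (krawtchouk_term N u1 v1 u2 v2 A (B + 1) x1 x2 i j k l - krawtchouk_term N u1 v1 u2 v2 A B x1 x2 i j k l))
       = sum4 (Suc N) (\<lambda>i j k l. (u2 * (real (i + k) - real x1) + v2 * (real (j + l) - real x2) - real (k + l)
            - u2 / u1 * real i - v2 / v1 * real j) * krawtchouk_term N u1 v1 u2 v2 A B x1 x2 i j k l)"
proof -
  have "sum4 (Suc N) (\<lambda>i j k l. (real N - A - B)
            * (krawtchouk_term N u1 v1 u2 v2 A (B + 1) x1 x2 i j k l - krawtchouk_term N u1 v1 u2 v2 A B x1 x2 i j k l))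
      = sum4 (Suc N) (\<lambda>i j k l. (real N - B - A)
            * (krawtchouk_term N u2 v2 u1 v1 (B + 1) A x1 x2 i j k l - krawtchouk_term N u2 v2 u1 v1 B A x1 x2 i j k l))"
    by (subst sum4_swap_blocks[symmetric]) (simp add: krawtchouk_term_swap_blocks algebra_simps)
  also have "\<dots> = sum4 (Suc N) (\<lambda>i j k l. (u2 * (real (i + k) - real x1) + v2 * (real (j + l) - real x2) - real (i + j)
            - u2 / u1 * real k - v2 / v1 * real l) * krawtchouk_term N u2 v2 u1 v1 B A x1 x2 i j k l)"
    using assms by (rule sum4_krawtchouk_term_raise_first)
  also have "\<dots> = sum4 (Suc N) (\<lambda>i j k l. (u2 * (real (i + k) - real x1) + v2 * (real (j + l) - real x2) - real (k + l)
            - u2 / u1 * real i - v2 / v1 * real j) * krawtchouk_term N u1 v1 u2 v2 A B x1 x2 i j k l)"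
    by (subst sum4_swap_blocks[symmetric]) (simp add: krawtchouk_term_swap_blocks ac_simps)
  finally show ?thesis .
qed

lemma krawtchouk_term_lower_first:
  "A * (krawtchouk_term N u1 v1 u2 v2 (A - 1) B x1 x2 i j k l - krawtchouk_term N u1 v1 u2 v2 A B x1 x2 i j k l)
   = - real (i + j) * krawtchouk_term N u1 v1 u2 v2 A B x1 x2 i j k l"
proof -
  have "A * (krawtchouk_term N u1 v1 u2 v2 (A - 1) B x1 x2 i j k l - krawtchouk_term N u1 v1 u2 v2 A B x1 x2 i j k l)
      = A * (pochhammer (- (A - 1)) (i + j) - pochhammer (- A) (i + j)) * pochhammer (- B) (k + l)
        * trinomial_term x1 u1 u2 i k * trinomial_term x2 v1 v2 j l / pochhammer (- real N) (i + j + k + l)"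
    by (simp add: krawtchouk_term_def divide_inverse algebra_simps)
  then show ?thesis
    unfolding pochhammer_minus_minus_one_diff by (simp add: krawtchouk_term_def)
qed

lemma krawtchouk_term_lower_second:
  "B * (krawtchouk_term N u1 v1 u2 v2 A (B - 1) x1 x2 i j k l - krawtchouk_term N u1 v1 u2 v2 A B x1 x2 i j k l)
   = - real (k + l) * krawtchouk_term N u1 v1 u2 v2 A B x1 x2 i j k l"
  using krawtchouk_term_lower_first[of B N u2 v2 u1 v1 A x1 x2 k l i j]
  by (simp add: krawtchouk_term_swap_blocks)

lemma Pbiv_lower_first_eq_sum4:
  "real m1 * (Pbiv N u1 v1 u2 v2 (m1 - 1) m2 x1 x2 - Pbiv N u1 v1 u2 v2 m1 m2 x1 x2)
   = sum4 (Suc N) (\<lambda>i j k l. - real (i + j) * krawtchouk_term N u1 v1 u2 v2 (real m1) (real m2) x1 x2 i j k l)"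
proof -
  have "real m1 * (Pbiv N u1 v1 u2 v2 (m1 - 1) m2 x1 x2 - Pbiv N u1 v1 u2 v2 m1 m2 x1 x2)
      = real m1 * (sum4 (Suc N) (krawtchouk_term N u1 v1 u2 v2 (real m1 - 1) (real m2) x1 x2)
                   - sum4 (Suc N) (krawtchouk_term N u1 v1 u2 v2 (real m1) (real m2) x1 x2))"
    by (cases m1) (simp_all add: Pbiv_eq_sum4)
  then show ?thesis
    by (simp only: sum4_diff[symmetric] sum4_mult_left[symmetric] krawtchouk_term_lower_first)
qed

lemma Pbiv_lower_second_eq_sum4:
  "real m2 * (Pbiv N u1 v1 u2 v2 m1 (m2 - 1) x1 x2 - Pbiv N u1 v1 u2 v2 m1 m2 x1 x2)
   = sum4 (Suc N) (\<lambda>i j k l. - real (k + l) * krawtchouk_term N u1 v1 u2 v2 (real m1) (real m2) x1 x2 i j k l)"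
proof -
  have "real m2 * (Pbiv N u1 v1 u2 v2 m1 (m2 - 1) x1 x2 - Pbiv N u1 v1 u2 v2 m1 m2 x1 x2)
      = real m2 * (sum4 (Suc N) (krawtchouk_term N u1 v1 u2 v2 (real m1) (real m2 - 1) x1 x2)
                   - sum4 (Suc N) (krawtchouk_term N u1 v1 u2 v2 (real m1) (real m2) x1 x2))"
    by (cases m2) (simp_all add: Pbiv_eq_sum4)
  then show ?thesis
    by (simp only: sum4_diff[symmetric] sum4_mult_left[symmetric] krawtchouk_term_lower_second)
qed

lemma Pbiv_difference_operator_eq_sum4:
  fixes u1 v1 u2 v2 \<alpha> \<gamma> \<beta> \<delta> :: real
  assumes "u1 \<noteq> 0" "u2 \<noteq> 0" "v1 \<noteq> 0" "v2 \<noteq> 0" "x1 + x2 \<le> N" "m1 + m2 \<le> N"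
  shows "let P = (\<lambda>a b. Pbiv N u1 v1 u2 v2 a b x1 x2) in
           real (N - m1 - m2) * (\<alpha> * (P (m1 + 1) m2 - P m1 m2) - \<gamma> * (P m1 (m2 + 1) - P m1 m2))
           + real m1 * \<beta> * (P (m1 - 1) m2 - P m1 m2) - real m2 * \<delta> * (P m1 (m2 - 1) - P m1 m2)
         = sum4 (Suc N) (\<lambda>i j k l.
             (\<alpha> * (u1 * (real (i + k) - real x1) + v1 * (real (j + l) - real x2) - real (i + j)
                   - u1 / u2 * real k - v1 / v2 * real l)
              - \<gamma> * (u2 * (real (i + k) - real x1) + v2 * (real (j + l) - real x2) - real (k + l)
                   - u2 / u1 * real i - v2 / v1 * real j)
              - \<beta> * real (i + j) + \<delta> * real (k + l))
             * krawtchouk_term N u1 v1 u2 v2 (real m1) (real m2) x1 x2 i j k l)"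
proof -
  let ?P = "\<lambda>a b. Pbiv N u1 v1 u2 v2 a b x1 x2" and ?K = "krawtchouk_term N u1 v1 u2 v2"
  have raise: "real (N - m1 - m2) * (?P (m1 + 1) m2 - ?P m1 m2)
        = sum4 (Suc N) (\<lambda>i j k l. (real N - real m1 - real m2)
            * (?K (real m1 + 1) (real m2) x1 x2 i j k l - ?K (real m1) (real m2) x1 x2 i j k l))"
      "real (N - m1 - m2) * (?P m1 (m2 + 1) - ?P m1 m2)
        = sum4 (Suc N) (\<lambda>i j k l. (real N - real m1 - real m2)
            * (?K (real m1) (real m2 + 1) x1 x2 i j k l - ?K (real m1) (real m2) x1 x2 i j k l))"
    using assms(6) by (simp_all add: Pbiv_eq_sum4 sum4_diff sum4_mult_left of_nat_diff add.commute)
  have "real (N - m1 - m2) * (\<alpha> * (?P (m1 + 1) m2 - ?P m1 m2) - \<gamma> * (?P m1 (m2 + 1) - ?P m1 m2))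
      + real m1 * \<beta> * (?P (m1 - 1) m2 - ?P m1 m2) - real m2 * \<delta> * (?P m1 (m2 - 1) - ?P m1 m2)
    = \<alpha> * (real (N - m1 - m2) * (?P (m1 + 1) m2 - ?P m1 m2)) - \<gamma> * (real (N - m1 - m2) * (?P m1 (m2 + 1) - ?P m1 m2))
      + \<beta> * (real m1 * (?P (m1 - 1) m2 - ?P m1 m2)) - \<delta> * (real m2 * (?P m1 (m2 - 1) - ?P m1 m2))"
    by (simp only: algebra_simps)
  also have "\<dots> = sum4 (Suc N) (\<lambda>i j k l.
             (\<alpha> * (u1 * (real (i + k) - real x1) + v1 * (real (j + l) - real x2) - real (i + j)
                   - u1 / u2 * real k - v1 / v2 * real l)
              - \<gamma> * (u2 * (real (i + k) - real x1) + v2 * (real (j + l) - real x2) - real (k + l)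
                   - u2 / u1 * real i - v2 / v1 * real j)
              - \<beta> * real (i + j) + \<delta> * real (k + l)) * ?K (real m1) (real m2) x1 x2 i j k l)"
    unfolding raise Pbiv_lower_first_eq_sum4 Pbiv_lower_second_eq_sum4
      sum4_krawtchouk_term_raise_first[OF assms(5,2,4)] sum4_krawtchouk_term_raise_second[OF assms(5,1,3)]
      sum4_mult_left[symmetric] sum4_add[symmetric] sum4_diff[symmetric]
    by (rule sum4_cong) (simp add: algebra_simps)
  finally show ?thesis
    unfolding Let_def .
qed

lemma Pbiv_difference_equation:
  fixes u1 v1 u2 v2 \<alpha> \<gamma> \<beta> \<delta> K1 K2 :: real
  assumes "u1 \<noteq> 0" "u2 \<noteq> 0" "v1 \<noteq> 0" "v2 \<noteq> 0" "x1 + x2 \<le> N" "m1 + m2 \<le> N"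
    and "\<gamma> * u2 - \<alpha> * u1 = K1" "\<gamma> * v2 - \<alpha> * v1 = - K2"
    and "\<alpha> * (u1 - 1) - \<gamma> * u2 * (u1 - 1) / u1 = \<beta>" "\<alpha> * (v1 - 1) - \<gamma> * v2 * (v1 - 1) / v1 = \<beta>"
    and "\<gamma> * (u2 - 1) - \<alpha> * u1 * (u2 - 1) / u2 = \<delta>" "\<gamma> * (v2 - 1) - \<alpha> * v1 * (v2 - 1) / v2 = \<delta>"
  shows "let P = (\<lambda>a b. Pbiv N u1 v1 u2 v2 a b x1 x2) in
           real (N - m1 - m2) * (\<alpha> * (P (m1 + 1) m2 - P m1 m2) - \<gamma> * (P m1 (m2 + 1) - P m1 m2))
           + real m1 * \<beta> * (P (m1 - 1) m2 - P m1 m2) - real m2 * \<delta> * (P m1 (m2 - 1) - P m1 m2)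
         = (K1 * real x1 - K2 * real x2) * P m1 m2"
proof -
  have coefficient:
    "\<alpha> * (u1 * (real (i + k) - real x1) + v1 * (real (j + l) - real x2) - real (i + j) - u1 / u2 * real k - v1 / v2 * real l)
     - \<gamma> * (u2 * (real (i + k) - real x1) + v2 * (real (j + l) - real x2) - real (k + l) - u2 / u1 * real i - v2 / v1 * real j)
     - \<beta> * real (i + j) + \<delta> * real (k + l)
     = K1 * real x1 - K2 * real x2" for i j k l
  proof -
    have "\<alpha> * (u1 * (real (i + k) - real x1) + v1 * (real (j + l) - real x2) - real (i + j) - u1 / u2 * real k - v1 / v2 * real l)
        - \<gamma> * (u2 * (real (i + k) - real x1) + v2 * (real (j + l) - real x2) - real (k + l) - u2 / u1 * real i - v2 / v1 * real j)
        - \<beta> * real (i + j) + \<delta> * real (k + l)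
      = real x1 * (\<gamma> * u2 - \<alpha> * u1) - real x2 * - (\<gamma> * v2 - \<alpha> * v1)
        + real i * (\<alpha> * (u1 - 1) - \<gamma> * u2 * (u1 - 1) / u1 - \<beta>) + real j * (\<alpha> * (v1 - 1) - \<gamma> * v2 * (v1 - 1) / v1 - \<beta>)
        + real k * (\<delta> - (\<gamma> * (u2 - 1) - \<alpha> * u1 * (u2 - 1) / u2)) + real l * (\<delta> - (\<gamma> * (v2 - 1) - \<alpha> * v1 * (v2 - 1) / v2))"
      using assms(1-4) by (simp add: field_simps)
    then show ?thesis
      unfolding assms(7-12) by simp
  qed
  show ?thesis
    using Pbiv_difference_operator_eq_sum4[OF assms(1-6), of \<alpha> \<gamma> \<beta> \<delta>]
    unfolding Let_def coefficient sum4_mult_left Pbiv_eq_sum4 .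
qed

lemma krawtchouk_parameter_relations:
  fixes p1 p2 p3 p4 :: real
  assumes "p1 > 0" "p2 > 0" "p3 > 0" "p4 > 0" "\<Delta> \<noteq> 0"
    and "\<Delta> = p1 * p4 - p2 * p3" "S = p1 + p2 + p3 + p4"
    and "u1 = (p1 + p2) * (p1 + p3) / (p1 * S)" "u2 = (p1 + p2) * (p2 + p4) / (p2 * S)"
    and "v1 = (p1 + p3) * (p3 + p4) / (p3 * S)" "v2 = (p2 + p4) * (p3 + p4) / (p4 * S)"
    and "\<alpha> = p1 * p3 * (p2 + p4) * S / ((p1 + p3) * \<Delta>)" "\<gamma> = p2 * p4 * (p1 + p3) * S / ((p2 + p4) * \<Delta>)"
    and "\<beta> = \<Delta> / (p1 + p3)" "\<delta> = \<Delta> / (p2 + p4)"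
  shows "\<gamma> * u2 - \<alpha> * u1 = p1 + p2" "\<gamma> * v2 - \<alpha> * v1 = - (p3 + p4)"
    and "\<alpha> * (u1 - 1) - \<gamma> * u2 * (u1 - 1) / u1 = \<beta>" "\<alpha> * (v1 - 1) - \<gamma> * v2 * (v1 - 1) / v1 = \<beta>"
    and "\<gamma> * (u2 - 1) - \<alpha> * u1 * (u2 - 1) / u2 = \<delta>" "\<gamma> * (v2 - 1) - \<alpha> * v1 * (v2 - 1) / v2 = \<delta>"
  using assms(1-5)
  by (simp_all add: assms(7-15) divide_simps) (simp_all add: assms(6) algebra_simps)

theorem mainTheorem5:
  fixes p1 p2 p3 p4 :: real and N m1 m2 x1 x2 :: nat
  assumes "p1 > 0" "p2 > 0" "p3 > 0" "p4 > 0"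
    and "p1 * p4 - p2 * p3 \<noteq> 0"
    and "x1 + x2 \<le> N" and "m1 + m2 \<le> N"
  shows "let \<Delta> = p1 * p4 - p2 * p3; S = p1 + p2 + p3 + p4;
             u1 = (p1 + p2) * (p1 + p3) / (p1 * S);
             u2 = (p1 + p2) * (p2 + p4) / (p2 * S);
             v1 = (p1 + p3) * (p3 + p4) / (p3 * S);
             v2 = (p2 + p4) * (p3 + p4) / (p4 * S);
             P = (\<lambda>a b. Pbiv N u1 v1 u2 v2 a b x1 x2)
         in real (N - m1 - m2) *
              (p1 * p3 * (p2 + p4) * S / ((p1 + p3) * \<Delta>) * (P (m1 + 1) m2 - P m1 m2)
               - p2 * p4 * (p1 + p3) * S / ((p2 + p4) * \<Delta>) * (P m1 (m2 + 1) - P m1 m2))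
            + real m1 * (\<Delta> / (p1 + p3)) * (P (m1 - 1) m2 - P m1 m2)
            - real m2 * (\<Delta> / (p2 + p4)) * (P m1 (m2 - 1) - P m1 m2)
          = ((p1 + p2) * real x1 - (p3 + p4) * real x2) * P m1 m2"
proof -
  let ?S = "p1 + p2 + p3 + p4"
  have nonzero: "(p1 + p2) * (p1 + p3) / (p1 * ?S) \<noteq> 0" "(p1 + p2) * (p2 + p4) / (p2 * ?S) \<noteq> 0"
      "(p1 + p3) * (p3 + p4) / (p3 * ?S) \<noteq> 0" "(p2 + p4) * (p3 + p4) / (p4 * ?S) \<noteq> 0"
    using assms(1-4) by simp_all
  note relations = krawtchouk_parameter_relations[OF assms(1-5) refl refl refl refl refl refl refl refl refl refl]
  show ?thesis
    using Pbiv_difference_equation[OF nonzero assms(6,7) relations] by (simp only: Let_def)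
qed

end
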